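(* Let $\alpha$ be a countably infinite order type and $S$ a sierpinskisation of $\alpha$ and $\omega$. Assume $\alpha=\omega\alpha'+n$ where $n<\omega$. Then there is a subset of $S$ which (with the induced order) is the direct sum $S'\oplus F$ of a sierpinskisation $S'$ of $\omega\alpha'$ and $\omega$ with an $n$-element poset $F$.
   Context: A sierpinskisation of a countable order type $\beta$ and $\omega$ is a poset whose order is the intersection of two linear orders on its underlying set, one of type $\beta$ and one of type $\omega$. $\omega\alpha'$ denotes the ordered sum of $\alpha'$ copies of the chain $\omega$, and $\omega\alpha'+n$ is followed by an $n$-element chain. The direct sum $A\oplus B$ of posets is their disjoint union in which elements of $A$ are incomparable to elements of $B$. *)

theory Defs
  imports Main "HOL-Library.Countable_Set"
begin

text \<open>Order types are represented by (reflexive) linear order relations;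
the carrier of a relation r is Field r.\<close>

definition is_linorder :: "'a rel \<Rightarrow> bool" where
  "is_linorder r \<longleftrightarrow> linear_order_on (Field r) r"

definition ord_iso :: "'a rel \<Rightarrow> 'b rel \<Rightarrow> ('a \<Rightarrow> 'b) \<Rightarrow> bool" where
  "ord_iso r s f \<longleftrightarrow> bij_betw f (Field r) (Field s) \<and>
     (\<forall>x\<in>Field r. \<forall>y\<in>Field r. (x, y) \<in> r \<longleftrightarrow> (f x, f y) \<in> s)"

definition omega_ord :: "nat rel" where
  "omega_ord = {(m, n). m \<le> n}"

text \<open>omega * b: the ordered sum of b copies of omega (lexicographic, b major).\<close>
definition omega_times :: "'c rel \<Rightarrow> ('c \<times> nat) rel" where
  "omega_times b = {((x, i), (y, j)). (x, y) \<in> b \<and> (x \<noteq> y \<or> i \<le> j)}"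

definition omega_times_plus :: "'c rel \<Rightarrow> nat \<Rightarrow> (('c \<times> nat) + nat) rel" where
  "omega_times_plus b n =
     {(Inl u, Inl v) | u v. (u, v) \<in> omega_times b}
   \<union> {(Inl u, Inr k) | u k. u \<in> Field (omega_times b) \<and> k < n}
   \<union> {(Inr k, Inr l) | k l. k \<le> l \<and> l < n}"

definition sierpinskisation :: "'a rel \<Rightarrow> 'b rel \<Rightarrow> bool" where
  "sierpinskisation P a \<longleftrightarrow>
     (\<exists>L1 L2. is_linorder L1 \<and> is_linorder L2 \<and>
        Field L1 = Field P \<and> Field L2 = Field P \<and> P = L1 \<inter> L2 \<and>
        (\<exists>f. ord_iso L1 a f) \<and> (\<exists>g. ord_iso L2 omega_ord g))"

end

theory Submission
  imports Defs
begin

text \<open>Write P = L1 \<inter> L2 with L1 of type \<omega>\<alpha>'+n and L2 of type \<omega>. Let B be the points in the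
final n-chain of L1 and m the largest L2-position of a point of B. Only finitely many points have
L2-position at most m, so for N large enough the points whose L1-position has index at least N in
its copy of \<omega> all lie L2-above B; these form A. Then A is L1-below and L2-above B, hence
incomparable with it; L1 restricted to A still has type \<omega>\<alpha>' (the first N points of each copy of
\<omega> are cut off), and L2 restricted to the infinite set A still has type \<omega>.\<close>

lemma is_linorder_Restr: "is_linorder r \<Longrightarrow> is_linorder (Restr r A)"
  unfolding is_linorder_def by (rule Linear_order_Restr)

lemma is_linorder_refl: "is_linorder r \<Longrightarrow> refl_on (Field r) r"
  by (simp add: is_linorder_def order_on_defs)

lemma Field_Restr_eq: "(\<And>x. x \<in> A \<Longrightarrow> (x, x) \<in> r) \<Longrightarrow> Field (Restr r A) = A"
  using Field_Restr_subset by (fastforce intro: FieldI1)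

lemma ord_iso_inv_into: "ord_iso r s f \<Longrightarrow> ord_iso s r (inv_into (Field r) f)"
  unfolding ord_iso_def
  by (smt (verit, best) bij_betw_imp_surj_on bij_betw_inv_into bij_betw_inv_into_right inv_into_into)

lemma ord_iso_comp: "ord_iso r s f \<Longrightarrow> ord_iso s t g \<Longrightarrow> ord_iso r t (g \<circ> f)"
  unfolding ord_iso_def by (metis (no_types, lifting) bij_betw_apply bij_betw_trans comp_apply)

lemma ord_iso_Restr:
  assumes f: "ord_iso r s f" and "refl_on (Field r) r" and "A \<subseteq> Field r"
  shows "ord_iso (Restr r A) (Restr s (f ` A)) f"
proof -
  have mono: "\<forall>x\<in>Field r. \<forall>y\<in>Field r. (x, y) \<in> r \<longleftrightarrow> (f x, f y) \<in> s"
    using f unfolding ord_iso_def by blast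
  have "(f x, f x) \<in> Restr s (f ` A)" if "x \<in> A" for x
    using that assms(2,3) mono unfolding refl_on_def by blast
  then have "Field (Restr s (f ` A)) = f ` A"
    by (metis Field_Restr_eq IntD1 imageE)
  moreover have "inj_on f A"
    using f assms(3) unfolding ord_iso_def bij_betw_def by (meson inj_on_subset)
  ultimately show ?thesis
    unfolding ord_iso_def Refl_Field_Restr2[OF assms(2,3)]
    using mono assms(3) by (auto simp: bij_betw_def)
qed

lemma Field_omega_ord [simp]: "Field omega_ord = UNIV"
  unfolding omega_ord_def Field_def by auto

lemma ord_iso_omega_enumerate:
  assumes "infinite S"
  shows "ord_iso omega_ord (Restr omega_ord S) (enumerate S)"
proof -
  have "Field (Restr omega_ord S) = S"
    by (auto simp: Field_def omega_ord_def)
  then show ?thesis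
    using bij_enumerate[OF assms] enumerate_in_set[OF assms] assms
    unfolding ord_iso_def Field_omega_ord by (auto simp: omega_ord_def)
qed

lemma sierpinskisation_Restr:
  assumes L1: "is_linorder L1" and L2: "is_linorder L2"
    and "Field L1 = X" "Field L2 = X" and g: "ord_iso L2 omega_ord g"
    and A: "A \<subseteq> X" "infinite A" and "ord_iso (Restr L1 A) c f"
  shows "sierpinskisation (Restr (L1 \<inter> L2) A) c"
  unfolding sierpinskisation_def
proof (intro exI conjI)
  have refl: "refl_on X (L1 \<inter> L2)"
    using is_linorder_refl[OF L1] is_linorder_refl[OF L2] assms(3,4) unfolding refl_on_def by auto
  have "Field (L1 \<inter> L2) = X"
    using refl assms(3) unfolding refl_on_def Field_def by blast
  then have FA: "Field (Restr (L1 \<inter> L2) A) = A"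
    using Refl_Field_Restr2 refl A by auto
  show "Field (Restr L1 A) = Field (Restr (L1 \<inter> L2) A)"
    using Refl_Field_Restr2[OF is_linorder_refl[OF L1]] FA A assms(3) by auto
  show "Field (Restr L2 A) = Field (Restr (L1 \<inter> L2) A)"
    using Refl_Field_Restr2[OF is_linorder_refl[OF L2]] FA A assms(4) by auto
  have "infinite (g ` A)"
    using A g assms(4) finite_imageD inj_on_subset unfolding ord_iso_def bij_betw_def by metis
  then show "ord_iso (Restr L2 A) omega_ord
      (inv_into (Field omega_ord) (enumerate (g ` A)) \<circ> g)"
    using ord_iso_Restr[OF g is_linorder_refl[OF L2]] A assms(4)
    by (metis ord_iso_comp ord_iso_inv_into ord_iso_omega_enumerate)
qed (use assms is_linorder_Restr in auto)

lemma Field_omega_times: "refl_on (Field b) b \<Longrightarrow> Field (omega_times b) = Field b \<times> UNIV"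
  unfolding omega_times_def Field_def refl_on_def by auto

lemma Field_omega_times_plus:
  assumes "refl_on (Field b) b"
  shows "Field (omega_times_plus b n) = Inl ` (Field b \<times> UNIV) \<union> Inr ` {..<n}"
proof -
  have omega_times_Field: "u \<in> Field b \<times> UNIV \<and> v \<in> Field b \<times> UNIV" if "(u, v) \<in> omega_times b" for u v
    using that FieldI1 FieldI2 Field_omega_times[OF assms] by metis
  have refl: "(z, z) \<in> omega_times_plus b n"
    if "z \<in> Inl ` (Field b \<times> UNIV) \<union> Inr ` {..<n}" for z
    using that assms Field_omega_times[OF assms]
    by (auto simp: omega_times_plus_def omega_times_def refl_on_def)
  show ?thesis
  proof
    show "Field (omega_times_plus b n) \<subseteq> Inl ` (Field b \<times> UNIV) \<union> Inr ` {..<n}"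
    proof
      fix z assume "z \<in> Field (omega_times_plus b n)"
      then obtain w where "(z, w) \<in> omega_times_plus b n \<or> (w, z) \<in> omega_times_plus b n"
        by (auto simp: Field_def)
      then show "z \<in> Inl ` (Field b \<times> UNIV) \<union> Inr ` {..<n}"
        unfolding omega_times_plus_def Field_omega_times[OF assms]
        by (auto dest: omega_times_Field)
    qed
  qed (use refl in \<open>blast intro: FieldI1\<close>)
qed

lemma ord_iso_omega_times_plus_tail:
  assumes "refl_on (Field b) b"
  shows "ord_iso (Restr (omega_times_plus b n) (Inl ` (Field b \<times> {N..})))
           (omega_times b) (\<lambda>z. (fst (projl z), snd (projl z) - N))"
proof -
  let ?T = "Inl ` (Field b \<times> {N..}) :: (_ + nat) set"
  have "Field (Restr (omega_times_plus b n) ?T) = ?T"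
    using assms by (intro Field_Restr_eq) (auto simp: omega_times_plus_def omega_times_def refl_on_def)
  moreover have "bij_betw (\<lambda>z. (fst (projl z), snd (projl z) - N)) ?T (Field b \<times> UNIV)"
    by (rule bij_betw_byWitness[where f' = "\<lambda>(x, i). Inl (x, i + N)"]) auto
  ultimately show ?thesis
    unfolding ord_iso_def Field_omega_times[OF assms]
    by (auto simp: omega_times_plus_def omega_times_def)
qed

lemma ex_tail_index_above_level:
  fixes g :: "'a \<Rightarrow> nat" and \<phi> :: "'a \<Rightarrow> ('c \<times> nat) + 'd"
  assumes "inj_on g X"
  shows "\<exists>N. \<forall>p\<in>X. \<forall>x i. \<phi> p = Inl (x, i) \<longrightarrow> N \<le> i \<longrightarrow> m < g p"
proof -
  have "finite (g -` {..m} \<inter> X)"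
    using finite_vimage_IntI[OF _ assms] by blast
  then have "finite ((\<lambda>p. snd (projl (\<phi> p))) ` (g -` {..m} \<inter> X))"
    by blast
  then obtain N where "\<forall>p \<in> g -` {..m} \<inter> X. snd (projl (\<phi> p)) < N"
    using finite_nat_set_iff_bounded by auto
  then show ?thesis
    by (metis IntI atMost_iff not_less snd_conv sum.sel(1) vimageI)
qed

lemma bij_betw_Collect_image_subset:
  "bij_betw f A B \<Longrightarrow> C \<subseteq> B \<Longrightarrow> bij_betw f {x \<in> A. f x \<in> C} C"
  by (auto simp: bij_betw_def inj_on_def)

lemma ord_iso_Restr_omega_times_plus_tail:
  assumes L: "is_linorder L" and \<phi>: "ord_iso L (omega_times_plus b n) \<phi>" and b: "refl_on (Field b) b"
  shows "ord_iso (Restr L {p \<in> Field L. \<phi> p \<in> Inl ` (Field b \<times> {N..})}) (omega_times b)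
           ((\<lambda>z. (fst (projl z), snd (projl z) - N)) \<circ> \<phi>)"
proof (rule ord_iso_comp)
  let ?A = "{p \<in> Field L. \<phi> p \<in> Inl ` (Field b \<times> {N..})}"
  have "bij_betw \<phi> ?A (Inl ` (Field b \<times> {N..}))"
    using \<phi> Field_omega_times_plus[OF b] unfolding ord_iso_def
    by (intro bij_betw_Collect_image_subset) auto
  then show "ord_iso (Restr L ?A) (Restr (omega_times_plus b n) (Inl ` (Field b \<times> {N..}))) \<phi>"
    using ord_iso_Restr[OF \<phi> is_linorder_refl[OF L], of ?A] by (simp add: bij_betw_def)
qed (rule ord_iso_omega_times_plus_tail[OF b])

lemma sierpinskisation_omega_times_plus_split:
  assumes L1: "is_linorder L1" and L2: "is_linorder L2"
    and FL1: "Field L1 = X" and FL2: "Field L2 = X"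
    and \<phi>: "ord_iso L1 (omega_times_plus b n) \<phi>" and g: "ord_iso L2 omega_ord g"
    and b: "is_linorder b" "Field b \<noteq> {}"
  shows "\<exists>A B. A \<subseteq> X \<and> B \<subseteq> X \<and> A \<inter> B = {} \<and> finite B \<and> card B = n \<and>
           (\<forall>x\<in>A. \<forall>y\<in>B. (x, y) \<notin> L1 \<inter> L2 \<and> (y, x) \<notin> L1 \<inter> L2) \<and>
           sierpinskisation (Restr (L1 \<inter> L2) A) (omega_times b)"
proof -
  have rb: "refl_on (Field b) b"
    using is_linorder_refl[OF b(1)] .
  have \<phi>_bij: "bij_betw \<phi> X (Field (omega_times_plus b n))"
    using \<phi> FL1 unfolding ord_iso_def by simp
  have \<phi>_le: "(x, y) \<in> L1 \<longleftrightarrow> (\<phi> x, \<phi> y) \<in> omega_times_plus b n" if "x \<in> X" "y \<in> X" for x y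
    using \<phi> FL1 that unfolding ord_iso_def by simp
  have g_le: "(x, y) \<in> L2 \<longleftrightarrow> g x \<le> g y" if "x \<in> X" "y \<in> X" for x y
    using g FL2 that unfolding ord_iso_def omega_ord_def by simp
  define B where "B = {p \<in> X. \<phi> p \<in> Inr ` {..<n}}"
  have "bij_betw \<phi> B (Inr ` {..<n})"
    unfolding B_def using Field_omega_times_plus[OF rb]
    by (intro bij_betw_Collect_image_subset[OF \<phi>_bij]) auto
  then have B: "finite B" "card B = n"
    by (simp_all add: bij_betw_finite bij_betw_same_card card_image)
  then have "finite (g ` B)"
    by simp
  then obtain m where m: "\<forall>p\<in>B. g p \<le> m"
    using finite_nat_set_iff_bounded_le by auto
  have "inj_on g X"
    using g FL2 unfolding ord_iso_def bij_betw_def by simp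
  then obtain N where N: "\<forall>p\<in>X. \<forall>x i. \<phi> p = Inl (x, i) \<longrightarrow> N \<le> i \<longrightarrow> m < g p"
    using ex_tail_index_above_level[where \<phi> = \<phi> and m = m] by blast
  define A where "A = {p \<in> X. \<phi> p \<in> Inl ` (Field b \<times> {N..})}"
  have AB: "A \<subseteq> X" "B \<subseteq> X" "A \<inter> B = {}"
    unfolding A_def B_def by auto
  have "m < g x" if "x \<in> A" for x
    using that N unfolding A_def by auto
  then have not_L2: "(x, y) \<notin> L2" if "x \<in> A" "y \<in> B" for x y
    using that m g_le AB by fastforce
  have not_L1: "(y, x) \<notin> L1" if "x \<in> A" "y \<in> B" for x y
    using that \<phi>_le[of y x] AB unfolding A_def B_def
    by (auto simp: omega_times_plus_def)
  obtain \<psi> where A_iso: "ord_iso (Restr L1 A) (omega_times b) \<psi>"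
    using ord_iso_Restr_omega_times_plus_tail[OF L1 \<phi> rb] unfolding A_def FL1 by blast
  have "infinite (Field b \<times> (UNIV :: nat set))"
    using b(2) by (simp add: finite_cartesian_product_iff)
  then have "infinite A"
    using A_iso Refl_Field_Restr2[OF is_linorder_refl[OF L1]] AB(1) FL1 Field_omega_times[OF rb]
    unfolding ord_iso_def by (metis bij_betw_finite)
  then have "sierpinskisation (Restr (L1 \<inter> L2) A) (omega_times b)"
    using sierpinskisation_Restr[OF L1 L2 FL1 FL2 g AB(1) _ A_iso] by blast
  moreover have "\<forall>x\<in>A. \<forall>y\<in>B. (x, y) \<notin> L1 \<inter> L2 \<and> (y, x) \<notin> L1 \<inter> L2"
    using not_L1 not_L2 by blast
  ultimately show ?thesis
    using AB B by (intro exI[of _ A] exI[of _ B] conjI)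
qed

theorem lemma2p7:
  fixes a :: "'b rel" and P :: "'a rel" and b :: "'c rel" and n :: nat
  assumes "is_linorder a" and "countable (Field a)" and "infinite (Field a)"
    and "sierpinskisation P a"
    and "is_linorder b" and "\<exists>h. ord_iso a (omega_times_plus b n) h"
  shows "\<exists>A B. A \<subseteq> Field P \<and> B \<subseteq> Field P \<and> A \<inter> B = {} \<and>
           finite B \<and> card B = n \<and>
           (\<forall>x\<in>A. \<forall>y\<in>B. (x, y) \<notin> P \<and> (y, x) \<notin> P) \<and>
           sierpinskisation (Restr P A) (omega_times b)"
proof -
  obtain L1 L2 f g where L: "is_linorder L1" "is_linorder L2"
    and FL: "Field L1 = Field P" "Field L2 = Field P" and P: "P = L1 \<inter> L2"
    and f: "ord_iso L1 a f" and g: "ord_iso L2 omega_ord g"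
    using assms(4) unfolding sierpinskisation_def by blast
  obtain h where h: "ord_iso a (omega_times_plus b n) h"
    using assms(6) by blast
  have b: "Field b \<noteq> {}"
  proof
    assume "Field b = {}"
    then have "finite (Field (omega_times_plus b n))"
      using Field_omega_times_plus[OF is_linorder_refl[OF assms(5)]] by simp
    then show False
      using h assms(3) bij_betw_finite unfolding ord_iso_def by blast
  qed
  show ?thesis
    using sierpinskisation_omega_times_plus_split[OF L FL ord_iso_comp[OF f h] g assms(5) b]
    unfolding P .
qed

end
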